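(* Let $m\ge1$ and let $X\subset\sqrt{m}\,\mathbb{S}^{m-1}$ be a spherical $2$-design with $|X|=n$ and degree $S$. For integers $i\ge0$ and $j$ with $i<j\le S$, we have $F_jG^{\circ i}=0$.
   Context: $\sqrt{m}\,\mathbb{S}^{m-1}=\{\bm x\in\mathbb{R}^m:\bm x\cdot\bm x=m\}$. $X$ is a spherical $2$-design if the average over $X$ of every polynomial of degree at most $2$ equals its average over the sphere. $C(X)$: real functions on $X$ with $(f,g)=\frac1n\sum_{\bm x}f(\bm x)g(\bm x)$. $\zeta_{\bm a}(p)(\bm x)=p(\bm a\cdot\bm x)$. $\mathrm{Pol}_0(X)$ = constants, $\mathrm{Pol}_1(X)=\mathrm{Span}\{\zeta_{\bm a}(p):\bm a\in X,\deg p\le1\}$, $\mathrm{Pol}_k(X)=\mathrm{Span}\{fg:f\in\mathrm{Pol}_1(X),g\in\mathrm{Pol}_{k-1}(X)\}$. Degree $S=\min\{i:\mathrm{Pol}_i(X)=C(X)\}$. $\mathrm{Harm}_0=\mathrm{Pol}_0$, $\mathrm{Harm}_k=\mathrm{Pol}_k\cap\mathrm{Pol}_{k-1}^\perp$. Matrices act on $C(X)$ by $(Mf)(\bm x)=\sum_{\bm y}M_{\bm x,\bm y}f(\bm y)$; $F_j$ ($0\le j\le S$) is the matrix of the orthogonal projection onto $\mathrm{Harm}_j(X)$. $G=\frac1n(\bm x\cdot\bm y)_{\bm x,\bm y\in X}$ and $G^{\circ i}$ is its $i$-th entrywise (Hadamard) power. *)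

theory Defs
  imports "HOL-Analysis.Analysis"
begin

definition quad_poly :: "real \<Rightarrow> real^'m \<Rightarrow> real^'m^'m \<Rightarrow> real^'m \<Rightarrow> real" where
  "quad_poly c b A x = c + (\<Sum>i\<in>UNIV. b$i * x$i) + (\<Sum>i\<in>UNIV. \<Sum>j\<in>UNIV. A$i$j * x$i * x$j)"

(* Average over the sphere sqrt(m) S^{m-1} w.r.t. the normalized (rotation invariant)
   surface measure, realised as the cone measure: push the uniform measure on the
   unit ball radially onto the sphere. *)
definition sphere_avg :: "(real^'m \<Rightarrow> real) \<Rightarrow> real" where
  "sphere_avg f = integral (ball 0 1)
       (\<lambda>x. f ((sqrt (real CARD('m)) / norm x) *\<^sub>R x)) / measure lebesgue (ball (0::real^'m) 1)"

definition spherical_2_design :: "(real^'m) set \<Rightarrow> bool" where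
  "spherical_2_design X \<longleftrightarrow> finite X \<and> X \<noteq> {} \<and>
     (\<forall>x\<in>X. x \<bullet> x = real CARD('m)) \<and>
     (\<forall>c b A. (\<Sum>x\<in>X. quad_poly c b A x) / real (card X) = sphere_avg (quad_poly c b A))"

definition CX :: "'a set \<Rightarrow> ('a \<Rightarrow> real) set" where
  "CX X = {f. \<forall>x. x \<notin> X \<longrightarrow> f x = 0}"

definition ip :: "'a set \<Rightarrow> ('a \<Rightarrow> real) \<Rightarrow> ('a \<Rightarrow> real) \<Rightarrow> real" where
  "ip X f g = (\<Sum>x\<in>X. f x * g x) / real (card X)"

definition fspan :: "('a \<Rightarrow> real) set \<Rightarrow> ('a \<Rightarrow> real) set" where
  "fspan B = {(\<lambda>x. \<Sum>g\<in>T. c g * g x) | T c. finite T \<and> T \<subseteq> B}"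

definition Pol1 :: "(real^'m) set \<Rightarrow> (real^'m \<Rightarrow> real) set" where
  "Pol1 X = fspan {(\<lambda>x. if x \<in> X then \<alpha> + \<beta> * (a \<bullet> x) else 0) | a \<alpha> \<beta>. a \<in> X}"

fun Pol :: "(real^'m) set \<Rightarrow> nat \<Rightarrow> (real^'m \<Rightarrow> real) set" where
  "Pol X 0 = fspan {(\<lambda>x. if x \<in> X then 1 else 0)}"
| "Pol X (Suc 0) = Pol1 X"
| "Pol X (Suc (Suc k)) = fspan {(\<lambda>x. f x * g x) | f g. f \<in> Pol1 X \<and> g \<in> Pol X (Suc k)}"

definition design_degree :: "(real^'m) set \<Rightarrow> nat" where
  "design_degree X = (LEAST i. Pol X i = CX X)"

fun Harm :: "(real^'m) set \<Rightarrow> nat \<Rightarrow> (real^'m \<Rightarrow> real) set" where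
  "Harm X 0 = Pol X 0"
| "Harm X (Suc k) = {f \<in> Pol X (Suc k). \<forall>g\<in>Pol X k. ip X f g = 0}"

definition mat_act :: "'a set \<Rightarrow> ('a \<Rightarrow> 'a \<Rightarrow> real) \<Rightarrow> ('a \<Rightarrow> real) \<Rightarrow> 'a \<Rightarrow> real" where
  "mat_act X M f = (\<lambda>x. if x \<in> X then (\<Sum>y\<in>X. M x y * f y) else 0)"

definition is_proj_matrix :: "'a set \<Rightarrow> ('a \<Rightarrow> real) set \<Rightarrow> ('a \<Rightarrow> 'a \<Rightarrow> real) \<Rightarrow> bool" where
  "is_proj_matrix X H M \<longleftrightarrow>
     (\<forall>f\<in>CX X. mat_act X M f \<in> H \<and> (\<forall>h\<in>H. ip X (\<lambda>x. f x - mat_act X M f x) h = 0))"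

definition gram :: "(real^'m) set \<Rightarrow> real^'m \<Rightarrow> real^'m \<Rightarrow> real" where
  "gram X x y = (x \<bullet> y) / real (card X)"

end

theory Submission
  imports Defs
begin

text \<open>The column z of G^(i) is the function y \<mapsto> (y\<bullet>z/n)^i, a product of i linear
  functions, so it lies in Pol_i(X) \<subseteq> Pol_(j-1)(X).  Harm_j(X) is orthogonal to Pol_(j-1)(X),
  and an orthogonal projection annihilates everything orthogonal to its range.\<close>

lemma fspan_base: "g \<in> B \<Longrightarrow> g \<in> fspan B"
  unfolding fspan_def
  by (rule CollectI, rule exI[of _ "{g}"], rule exI[of _ "\<lambda>_. 1"]) auto

lemma fspan_singletonE:
  assumes "f \<in> fspan {g}"
  obtains c where "f = (\<lambda>x. c * g x)"
proof -
  obtain T c where f: "f = (\<lambda>x. \<Sum>h\<in>T. c h * h x)" and "T \<subseteq> {g}"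
    using assms by (auto simp: fspan_def)
  then consider "T = {}" | "T = {g}" by blast
  then show ?thesis
    by cases (use f that in \<open>auto simp: fun_eq_iff intro: exI[of _ 0]\<close>)
qed

lemma fspan_vanish:
  assumes "\<And>g. g \<in> B \<Longrightarrow> g x = 0" "f \<in> fspan B"
  shows "f x = 0"
  using assms unfolding fspan_def by (auto intro!: sum.neutral)

lemma Pol1_affine:
  "a \<in> X \<Longrightarrow> (\<lambda>x. if x \<in> X then \<alpha> + \<beta> * (a \<bullet> x) else 0) \<in> Pol1 X"
  unfolding Pol1_def by (rule fspan_base) blast

lemma Pol1_const:
  assumes "X \<noteq> {}"
  shows "(\<lambda>x. if x \<in> X then c else 0) \<in> Pol1 X"
proof -
  obtain a where "a \<in> X" using assms by auto
  from Pol1_affine[OF this, where \<alpha> = c and \<beta> = 0] show ?thesis by (simp cong: if_cong)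
qed

lemma Pol_Suc_Suc_mult:
  "f \<in> Pol1 X \<Longrightarrow> g \<in> Pol X (Suc k) \<Longrightarrow> (\<lambda>x. f x * g x) \<in> Pol X (Suc (Suc k))"
  by (auto intro: fspan_base)

lemma Pol1_vanish: "f \<in> Pol1 X \<Longrightarrow> x \<notin> X \<Longrightarrow> f x = 0"
  unfolding Pol1_def by (erule fspan_vanish[rotated]) auto

lemma Pol_vanish: "f \<in> Pol X k \<Longrightarrow> x \<notin> X \<Longrightarrow> f x = 0"
proof (induction X k arbitrary: f rule: Pol.induct)
  case 1 then show ?case by (auto elim!: fspan_vanish[rotated])
next
  case 2 then show ?case by (simp add: Pol1_vanish)
next
  case 3 then show ?case by (auto elim!: fspan_vanish[rotated] simp: Pol1_vanish)
qed

lemma Pol_Suc_mono: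
  assumes "X \<noteq> {}" "f \<in> Pol X k"
  shows "f \<in> Pol X (Suc k)"
proof (cases k)
  case 0
  with assms(2) obtain c where "f = (\<lambda>x. c * (if x \<in> X then 1 else 0))"
    by (auto elim: fspan_singletonE)
  then have "f = (\<lambda>x. if x \<in> X then c else 0)" by (auto simp: fun_eq_iff)
  with 0 Pol1_const[OF assms(1)] show ?thesis by simp
next
  case (Suc k')
  have "f = (\<lambda>x. (if x \<in> X then 1 else 0) * f x)"
    using Pol_vanish[OF assms(2)] by (auto simp: fun_eq_iff)
  with Pol_Suc_Suc_mult[OF Pol1_const[OF assms(1)]] assms(2) Suc show ?thesis by metis
qed

lemma Pol_mono:
  assumes "X \<noteq> {}" "i \<le> k" "f \<in> Pol X i"
  shows "f \<in> Pol X k"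
  using assms(2,3) by (induction k rule: dec_induct) (auto intro: Pol_Suc_mono[OF assms(1)])

lemma gram_Pol1:
  assumes "z \<in> X"
  shows "(\<lambda>y. if y \<in> X then gram X y z else 0) \<in> Pol1 X"
  using Pol1_affine[OF assms, where \<alpha> = 0 and \<beta> = "1 / real (card X)"]
  by (simp add: gram_def inner_commute cong: if_cong)

lemma gram_power_Pol:
  assumes "z \<in> X"
  shows "(\<lambda>y. if y \<in> X then gram X y z ^ i else 0) \<in> Pol X i"
proof (induction i rule: induct_nat_012)
  case 0
  show ?case by (simp add: fspan_base cong: if_cong)
next
  case 1
  show ?case using gram_Pol1[OF assms] by (simp cong: if_cong)
next
  case (ge2 k)
  have "(\<lambda>y. if y \<in> X then gram X y z ^ Suc (Suc k) else 0)
      = (\<lambda>y. (if y \<in> X then gram X y z else 0) * (if y \<in> X then gram X y z ^ Suc k else 0))"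
    by (auto simp: fun_eq_iff)
  with Pol_Suc_Suc_mult[OF gram_Pol1[OF assms] ge2(2)] show ?case by simp
qed

lemma Harm_orthogonal_Pol:
  assumes "X \<noteq> {}" "h \<in> Harm X (Suc k)" "g \<in> Pol X i" "i \<le> k"
  shows "ip X h g = 0"
  using assms Pol_mono[OF assms(1,4,3)] by simp

lemma proj_matrix_kills_orthogonal:
  assumes "is_proj_matrix X H M" "finite X" "f \<in> CX X" "\<And>h. h \<in> H \<Longrightarrow> ip X h f = 0"
    and "x \<in> X"
  shows "mat_act X M f x = 0"
proof -
  define p where "p = mat_act X M f"
  have pH: "p \<in> H" and "ip X (\<lambda>y. f y - p y) p = 0"
    using assms(1,3) unfolding is_proj_matrix_def p_def by auto
  moreover have "ip X p f = 0" using assms(4) pH .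
  moreover have "card X > 0" using assms(2,5) card_gt_0_iff by blast
  ultimately have "(\<Sum>y\<in>X. p y * f y) = 0" "(\<Sum>y\<in>X. (f y - p y) * p y) = 0"
    by (simp_all add: ip_def)
  then have "(\<Sum>y\<in>X. p y * p y) = 0"
    by (simp add: algebra_simps sum_subtractf mult.commute)
  then have "\<forall>y\<in>X. p y * p y = 0"
    using sum_nonneg_eq_0_iff[OF assms(2), of "\<lambda>y. p y * p y"] by simp
  then show ?thesis using assms(5) by (simp add: p_def)
qed

theorem lemma3p4:
  fixes X :: "(real^'m) set" and F :: "real^'m \<Rightarrow> real^'m \<Rightarrow> real" and i j :: nat
  assumes "spherical_2_design X"
    and "i < j" and "j \<le> design_degree X"
    and "is_proj_matrix X (Harm X j) F"
  shows "\<forall>x\<in>X. \<forall>z\<in>X. (\<Sum>y\<in>X. F x y * (gram X y z) ^ i) = 0"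
proof (intro ballI)
  fix x z assume x: "x \<in> X" and z: "z \<in> X"
  have fin: "finite X" and ne: "X \<noteq> {}"
    using assms(1) by (auto simp: spherical_2_design_def)
  obtain k where j: "j = Suc k" and "i \<le> k" using assms(2) by (cases j) auto
  define f where "f = (\<lambda>y. if y \<in> X then gram X y z ^ i else 0)"
  have "f \<in> Pol X i" unfolding f_def by (rule gram_power_Pol[OF z])
  then have "mat_act X F f x = 0"
    using proj_matrix_kills_orthogonal[OF assms(4) fin _ _ x] Harm_orthogonal_Pol[OF ne] \<open>i \<le> k\<close>
    unfolding j by (auto simp: CX_def f_def)
  moreover have "mat_act X F f x = (\<Sum>y\<in>X. F x y * gram X y z ^ i)"
    using x by (auto simp: mat_act_def f_def intro!: sum.cong)
  ultimately show "(\<Sum>y\<in>X. F x y * gram X y z ^ i) = 0" by simp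
qed

end
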